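(* Let ${\mathscr X}$ be a Hausdorff space, ${\mathscr A}$ a set of finite Borel partitions of ${\mathscr X}$ directed under refinement, and equip $M^1({\mathscr X})$ with the weak topology (assumed Hausdorff, with $P\mapsto P(A)$ Borel measurable for all Borel $A$). Let $\Pi$ be a Radon probability measure on $M^1({\mathscr X})$ (weak topology) with mean measure $G$. Then for every $\delta,\epsilon>0$ there exist $\alpha\in{\mathscr A}$ and $\eta>0$ such that for every Borel set $B$ with $\inf\{G(B\triangle C):C\in\sigma(\alpha)\}<\eta$, $$\Pi\Bigl(\bigl\{P\in M^1({\mathscr X}):\inf\{P(B\triangle C):C\in\sigma(\alpha)\}>\delta\bigr\}\Bigr)<\epsilon.$$
   Context: The weak topology on $M^1({\mathscr X})$ (Radon probability measures) is the coarsest topology making $P\mapsto\int h\,dP$ continuous for all bounded Borel $h$. Mean measure: $G(A)=\int P(A)\,d\Pi(P)$. $B\triangle C=(B\setminus C)\cup(C\setminus B)$; $\sigma(\alpha)$ is the $\sigma$-algebra generated by the partition $\alpha$. *)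

theory Defs
  imports "HOL-Probability.Probability"
begin

definition borel_of :: "'a topology \<Rightarrow> 'a measure" where
  "borel_of T = sigma (topspace T) {U. openin T U}"

definition radon_prob_on :: "'a topology \<Rightarrow> 'a measure \<Rightarrow> bool" where
  "radon_prob_on T M \<longleftrightarrow> prob_space M \<and> space M = topspace T \<and> sets M = sets (borel_of T) \<and>
     (\<forall>A\<in>sets M. emeasure M A = (SUP K\<in>{K. compactin T K \<and> K \<subseteq> A}. emeasure M K))"

definition M1 :: "('a::topological_space) measure set" where
  "M1 = {P. radon_prob_on euclidean P \<and> sets P = sets borel}"

definition weak_top :: "('a::topological_space) measure topology" where
  "weak_top = topology_generated_by
     {{P \<in> M1. (\<integral>x. h x \<partial>P) \<in> U} | h U.
        h \<in> borel_measurable (borel :: 'a measure) \<and> bounded (range h) \<and> open (U :: real set)}"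

definition mean_measure :: "'a measure measure \<Rightarrow> 'a set \<Rightarrow> real" where
  "mean_measure Pm A = (\<integral>P. measure P A \<partial>Pm)"

definition finite_borel_partition :: "('a::topological_space) set set \<Rightarrow> bool" where
  "finite_borel_partition \<alpha> \<longleftrightarrow> finite \<alpha> \<and> \<alpha> \<subseteq> sets borel \<and> {} \<notin> \<alpha> \<and>
     disjoint \<alpha> \<and> \<Union>\<alpha> = UNIV"

definition refines :: "'a set set \<Rightarrow> 'a set set \<Rightarrow> bool" where
  "refines \<gamma> \<alpha> \<longleftrightarrow> (\<forall>C\<in>\<gamma>. \<exists>A\<in>\<alpha>. C \<subseteq> A)"

definition directed_by_refinement :: "'a set set set \<Rightarrow> bool" where
  "directed_by_refinement \<AA> \<longleftrightarrow> \<AA> \<noteq> {} \<and>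
     (\<forall>\<alpha>\<in>\<AA>. \<forall>\<beta>\<in>\<AA>. \<exists>\<gamma>\<in>\<AA>. refines \<gamma> \<alpha> \<and> refines \<gamma> \<beta>)"

end

theory Submission
  imports Defs
begin

text \<open>Any partition in \<open>\<AA>\<close> works, with \<open>\<eta> = \<epsilon> \<delta>\<close>. If \<open>G(B \<triangle> C) < \<epsilon> \<delta>\<close> for some
  \<open>C \<in> \<sigma>(\<alpha>)\<close>, then the set of \<open>P\<close> whose distance from \<open>B\<close> to \<open>\<sigma>(\<alpha>)\<close> exceeds \<open>\<delta>\<close> lies in
  \<open>{P. P(B \<triangle> C) \<ge> \<delta>}\<close>, and Markov's inequality for \<open>P \<mapsto> P(B \<triangle> C)\<close> under \<open>\<Pi>\<close>, whose
  integral is \<open>G(B \<triangle> C)\<close>, bounds its mass by \<open>G(B \<triangle> C) / \<delta> < \<epsilon>\<close>.\<close>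

lemma topspace_weak_top_subset_M1: "topspace (weak_top :: 'a::topological_space measure topology) \<subseteq> M1"
  unfolding weak_top_def topology_generated_by_topspace by blast

lemma prob_space_if_in_M1: "P \<in> M1 \<Longrightarrow> prob_space P"
  unfolding M1_def radon_prob_on_def by auto

lemma integrable_measure_weak_top:
  fixes Pm :: "'a::topological_space measure measure"
  assumes radon: "radon_prob_on weak_top Pm"
    and meas: "(\<lambda>P. measure P A) \<in> borel_measurable (borel_of weak_top)"
  shows "integrable Pm (\<lambda>P. measure P A)"
proof -
  interpret Pm: prob_space Pm
    using radon unfolding radon_prob_on_def by simp
  have "(\<lambda>P. measure P A) \<in> borel_measurable Pm"
    using meas radon measurable_cong_sets unfolding radon_prob_on_def by blast
  moreover have "prob_space P" if "P \<in> space Pm" for P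
    using that radon topspace_weak_top_subset_M1 prob_space_if_in_M1
    unfolding radon_prob_on_def by blast
  ultimately show ?thesis
    by (intro Pm.integrable_const_bound[where B=1]) (auto simp: prob_space.prob_le_1)
qed

text \<open>\<open>S\<close> need not be measurable; then \<open>measure M S = 0\<close> and the claim reduces to \<open>\<epsilon> > 0\<close>,
  which follows from \<open>0 \<le> \<integral>f\<close>.\<close>
lemma measure_lt_if_integral_lt:
  fixes f :: "'a \<Rightarrow> real"
  assumes f: "integrable M f" and nonneg: "\<And>x. x \<in> space M \<Longrightarrow> 0 \<le> f x"
    and "0 < \<delta>" and int_lt: "(\<integral>x. f x \<partial>M) < \<epsilon> * \<delta>"
    and S: "S \<subseteq> {x. \<delta> \<le> f x}"
  shows "measure M S < \<epsilon>"
proof (cases "S \<in> sets M")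
  case False
  have "0 \<le> (\<integral>x. f x \<partial>M)" using nonneg by (intro integral_nonneg_AE) auto
  with int_lt have "0 < \<epsilon> * \<delta>" by linarith
  with \<open>0 < \<delta>\<close> have "0 < \<epsilon>" by (simp add: zero_less_mult_iff)
  with False show ?thesis by (simp add: measure_notin_sets)
next
  case True
  then have "S \<subseteq> {x \<in> space M. \<delta> \<le> f x}"
    using S sets.sets_into_space by blast
  moreover have "{x \<in> space M. \<delta> \<le> f x} \<in> fmeasurable M"
  proof (rule fmeasurableI)
    show "{x \<in> space M. \<delta> \<le> f x} \<in> sets M"
      using f by measurable
    have "emeasure M {x \<in> space M. \<delta> \<le> f x} \<le> ennreal (1 / \<delta> * (\<integral>x. f x \<partial>M))"
      using nonneg by (intro integral_Markov_inequality[OF f _ \<open>0 < \<delta>\<close>] AE_I2)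
    then show "emeasure M {x \<in> space M. \<delta> \<le> f x} < \<infinity>"
      using ennreal_less_top infinity_ennreal_def le_less_trans by metis
  qed
  ultimately have "measure M S \<le> measure M {x \<in> space M. \<delta> \<le> f x}"
    using True by (intro measure_mono_fmeasurable)
  also have "\<dots> \<le> (\<integral>x. f x \<partial>M) / \<delta>"
    using f nonneg \<open>0 < \<delta>\<close> by (intro integral_Markov_inequality_measure[of _ _ "space M"]) auto
  also have "\<dots> < \<epsilon>"
    using int_lt \<open>0 < \<delta>\<close> by (simp add: pos_divide_less_eq)
  finally show ?thesis .
qed

theorem mainTheorem5:
  fixes \<AA> :: "('a::t2_space) set set set"
    and Pm :: "'a measure measure"
    and \<delta> \<epsilon> :: real
  assumes parts: "\<forall>\<alpha>\<in>\<AA>. finite_borel_partition \<alpha>"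
    and directed: "directed_by_refinement \<AA>"
    and haus: "Hausdorff_space (weak_top :: 'a measure topology)"
    and meas: "\<forall>A\<in>sets (borel :: 'a measure).
                 (\<lambda>P. measure P A) \<in> borel_measurable (borel_of (weak_top :: 'a measure topology))"
    and radon: "radon_prob_on weak_top Pm"
    and "\<delta> > 0" and "\<epsilon> > 0"
  shows "\<exists>\<alpha>\<in>\<AA>. \<exists>\<eta>>0. \<forall>B\<in>sets (borel :: 'a measure).
           (INF C\<in>sigma_sets UNIV \<alpha>. mean_measure Pm (B - C \<union> (C - B))) < \<eta> \<longrightarrow>
           measure Pm {P \<in> M1. (INF C\<in>sigma_sets UNIV \<alpha>. measure P (B - C \<union> (C - B))) > \<delta>} < \<epsilon>"
proof -
  obtain \<alpha> where \<alpha>: "\<alpha> \<in> \<AA>" using directed unfolding directed_by_refinement_def by blast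
  have \<sigma>\<alpha>_borel: "sigma_sets UNIV \<alpha> \<subseteq> sets borel"
    using parts \<alpha> sets.sigma_sets_subset[of \<alpha> borel] unfolding finite_borel_partition_def by auto
  show ?thesis
  proof (intro bexI[OF _ \<alpha>] exI[of _ "\<epsilon> * \<delta>"] conjI ballI impI)
    show "0 < \<epsilon> * \<delta>" using \<open>0 < \<epsilon>\<close> \<open>0 < \<delta>\<close> by simp
    fix B :: "'a set" assume B: "B \<in> sets borel"
    assume "(INF C\<in>sigma_sets UNIV \<alpha>. mean_measure Pm (B - C \<union> (C - B))) < \<epsilon> * \<delta>"
    from cInf_lessD[OF _ this] obtain C where C: "C \<in> sigma_sets UNIV \<alpha>"
      and G_lt: "mean_measure Pm (B - C \<union> (C - B)) < \<epsilon> * \<delta>"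
      using sigma_sets.Empty by blast
    have D: "B - C \<union> (C - B) \<in> sets borel" using B C \<sigma>\<alpha>_borel by auto
    show "measure Pm {P \<in> M1. (INF C\<in>sigma_sets UNIV \<alpha>. measure P (B - C \<union> (C - B))) > \<delta>} < \<epsilon>"
    proof (rule measure_lt_if_integral_lt)
      show "integrable Pm (\<lambda>P. measure P (B - C \<union> (C - B)))"
        using radon meas D by (intro integrable_measure_weak_top) auto
      show "(\<integral>P. measure P (B - C \<union> (C - B)) \<partial>Pm) < \<epsilon> * \<delta>"
        using G_lt unfolding mean_measure_def .
      have "\<delta> \<le> measure P (B - C \<union> (C - B))"
        if "(INF C\<in>sigma_sets UNIV \<alpha>. measure P (B - C \<union> (C - B))) > \<delta>" for P :: "'a measure"
      proof -
        have "(INF C\<in>sigma_sets UNIV \<alpha>. measure P (B - C \<union> (C - B))) \<le> measure P (B - C \<union> (C - B))"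
          using C by (intro cINF_lower bdd_belowI2[where m=0]) auto
        with that show ?thesis by linarith
      qed
      then show "{P \<in> M1. (INF C\<in>sigma_sets UNIV \<alpha>. measure P (B - C \<union> (C - B))) > \<delta>}
          \<subseteq> {P. \<delta> \<le> measure P (B - C \<union> (C - B))}"
        by blast
    qed (use \<open>0 < \<delta>\<close> in auto)
  qed
qed

end
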